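(* Let $(X,d)$ be a separable metric space, $T\colon X\to X$ a Borel measurable map and $\mu$ a $T$-invariant Borel probability measure such that $(X,T,\mu)$ is weakly mixing. Let $(s_n)_{n\ge1}$ be a two-jumpy scale sequence. Then the proximality gauge $\psi(x,y)=\liminf_{n\to\infty} s_n\, d(T^nx,T^ny)$ satisfies either $\psi=0$ for $\mu\times\mu$-a.e. $(x,y)$, or $\psi=\infty$ for $\mu\times\mu$-a.e. $(x,y)$.
   Context: A scale sequence is a sequence $(s_n)_{n\ge1}$ of positive reals with $s_n\to\infty$; it is two-jumpy if $s_{n+1}\ge s_n$ for all large $n$ and $\liminf_n s_{2n}/s_n>1$. Weakly mixing means $T\times T$ is ergodic with respect to $\mu\times\mu$. *)

theory Defs
  imports "HOL-Probability.Probability"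
begin

definition ergodic :: "'a measure \<Rightarrow> ('a \<Rightarrow> 'a) \<Rightarrow> bool" where
  "ergodic N f \<longleftrightarrow>
     (\<forall>A\<in>sets N. f -` A \<inter> space N = A \<longrightarrow> measure N A = 0 \<or> measure N A = 1)"

definition weakly_mixing :: "'a measure \<Rightarrow> ('a \<Rightarrow> 'a) \<Rightarrow> bool" where
  "weakly_mixing M T \<longleftrightarrow> ergodic (M \<Otimes>\<^sub>M M) (\<lambda>(x, y). (T x, T y))"

text \<open>Scale sequence, indexed from n = 1 (the value at 0 is irrelevant).\<close>
definition scale_sequence :: "(nat \<Rightarrow> real) \<Rightarrow> bool" where
  "scale_sequence s \<longleftrightarrow> (\<forall>n\<ge>1. s n > 0) \<and> filterlim s at_top sequentially"

definition two_jumpy :: "(nat \<Rightarrow> real) \<Rightarrow> bool" where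
  "two_jumpy s \<longleftrightarrow> scale_sequence s \<and>
     (\<forall>\<^sub>F n in sequentially. s (Suc n) \<ge> s n) \<and>
     liminf (\<lambda>n. ereal (s (2 * n) / s n)) > 1"

definition prox_gauge :: "(nat \<Rightarrow> real) \<Rightarrow> ('a::metric_space \<Rightarrow> 'a) \<Rightarrow> 'a \<Rightarrow> 'a \<Rightarrow> ereal" where
  "prox_gauge s T x y = liminf (\<lambda>n. ereal (s n * dist ((T ^^ n) x) ((T ^^ n) y)))"

end

theory Submission
  imports Defs
begin

text \<open>Put \<open>N = \<mu> \<times> \<mu>\<close>, \<open>S = T \<times> T\<close> and \<open>D (x, y) = d(x, y)\<close>, so that
  \<open>\<psi> z = liminf s\<^sub>n D(S\<^sup>n z)\<close>. As \<open>s\<close> is eventually increasing, \<open>\<psi> (S z) \<le> \<psi> z\<close>, so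
  ergodicity of \<open>S\<close> (weak mixing) makes \<open>\<psi>\<close> almost everywhere equal to a constant \<open>C\<close>.
  Suppose \<open>0 < C < \<infinity>\<close>, take \<open>c > 1\<close> with \<open>s\<^sub>2\<^sub>n \<ge> c s\<^sub>n\<close> eventually, and fix
  \<open>C / c < a < C\<close>. The points whose scaled distances still drop below \<open>a\<close> after time \<open>K\<close>
  form a set \<open>Bad\<^sub>K\<close> of small measure. But for almost every \<open>z\<close> there are arbitrarily large
  \<open>n\<close> with \<open>s\<^sub>n D(S\<^sup>n z) < c a\<close>, and the doubling property then puts \<open>S\<^sup>j z\<close> into
  \<open>Bad\<^sub>K\<close> for all \<open>j\<close> between \<open>n/2\<close> and \<open>n - K\<close>. So almost every orbit spends a fifth of
  some initial time window in \<open>Bad\<^sub>K\<close>, which the maximal ergodic inequality forbids.\<close>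

lemma sum_of_bool_le_sum_windows:
  fixes b :: "nat \<Rightarrow> real" and P :: "nat \<Rightarrow> bool"
  assumes b_nonneg: "\<And>t. 0 \<le> b t" and "0 < \<beta>"
    and window: "\<And>i. P i \<Longrightarrow> \<exists>n\<in>{1..N}. \<beta> * real n \<le> (\<Sum>t\<in>{i..<i+n}. b t)"
  shows "\<beta> * (\<Sum>i\<in>{i0..<i0+L}. of_bool (P i)) \<le> (\<Sum>t\<in>{i0..<i0+L+N}. b t)"
proof (induction L arbitrary: i0 rule: less_induct)
  case (less L)
  have count_le: "(\<Sum>i\<in>{a..<a+m}. of_bool (P i)) \<le> real m" for a m
    using sum_mono[of "{a..<a+m}" "\<lambda>i. of_bool (P i)" "\<lambda>_. 1::real"] by simp
  have b_sum_mono: "(\<Sum>t\<in>{a..<e}. b t) \<le> (\<Sum>t\<in>{a'..<e'}. b t)" if "a' \<le> a" "e \<le> e'" for a e a' e'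
    by (rule sum_mono2) (use that b_nonneg in auto)
  have split: "(\<Sum>i\<in>{a..<a+m+k}. g i) = (\<Sum>i\<in>{a..<a+m}. g i) + (\<Sum>i\<in>{a+m..<(a+m)+k}. g i)"
    for a m k and g :: "nat \<Rightarrow> real"
    by (simp add: sum.atLeastLessThan_concat add.assoc)
  show ?case
  proof (cases "L = 0")
    case True
    then show ?thesis by (simp add: sum_nonneg b_nonneg)
  next
    case L: False
    show ?thesis
    proof (cases "P i0")
      case False
      have "\<beta> * (\<Sum>i\<in>{i0..<i0+L}. of_bool (P i)) = \<beta> * (\<Sum>i\<in>{i0+1..<(i0+1)+(L-1)}. of_bool (P i))"
        using split[of "\<lambda>i. of_bool (P i)" i0 1 "L-1"] L False by simp
      also have "\<dots> \<le> (\<Sum>t\<in>{i0+1..<(i0+1)+(L-1)+N}. b t)"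
        using L by (intro less.IH) auto
      also have "\<dots> \<le> (\<Sum>t\<in>{i0..<i0+L+N}. b t)"
        using L by (intro b_sum_mono) auto
      finally show ?thesis .
    next
      case True
      then obtain n where n: "1 \<le> n" "n \<le> N" "\<beta> * real n \<le> (\<Sum>t\<in>{i0..<i0+n}. b t)"
        using window[OF True] by auto
      show ?thesis
      proof (cases "L \<le> n")
        case True
        have "\<beta> * (\<Sum>i\<in>{i0..<i0+L}. of_bool (P i)) \<le> \<beta> * real n"
          using count_le[of i0 L] True \<open>0 < \<beta>\<close> by (intro mult_left_mono) auto
        also have "\<dots> \<le> (\<Sum>t\<in>{i0..<i0+L+N}. b t)"
          using n b_sum_mono[of i0 i0 "i0+n" "i0+L+N"] by linarith
        finally show ?thesis .
      next
        case False
        have "\<beta> * (\<Sum>i\<in>{i0..<i0+n}. of_bool (P i)) \<le> \<beta> * real n"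
          using count_le[of i0 n] \<open>0 < \<beta>\<close> by (intro mult_left_mono) auto
        moreover have "\<beta> * (\<Sum>i\<in>{i0+n..<(i0+n)+(L-n)}. of_bool (P i)) \<le> (\<Sum>t\<in>{i0+n..<(i0+n)+(L-n)+N}. b t)"
          using n False by (intro less.IH) auto
        ultimately show ?thesis
          using n(3) split[of "\<lambda>i. of_bool (P i)" i0 n "L-n"] split[of b i0 n "L-n+N"] False
          by (simp add: distrib_left add.assoc)
      qed
    qed
  qed
qed

lemma (in prob_space) AE_eq_const_if_sublevels_trivial:
  fixes g :: "'a \<Rightarrow> ereal"
  assumes [measurable]: "g \<in> borel_measurable M"
    and trivial: "\<And>q. prob {x\<in>space M. g x < ereal q} = 0 \<or> prob {x\<in>space M. g x < ereal q} = 1"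
  shows "\<exists>C. AE x in M. g x = C"
proof
  define C where "C = (SUP q\<in>{q. prob {x\<in>space M. g x < ereal q} = 0}. ereal q)"
  have below: "AE x in M. ereal q \<le> g x" if "ereal q < C" for q
  proof -
    obtain q' where "prob {x\<in>space M. g x < ereal q'} = 0" "q < q'"
      using \<open>ereal q < C\<close> by (auto simp: C_def less_SUP_iff)
    then have "AE x in M. ereal q' \<le> g x" by (subst (asm) prob_eq_0) (auto simp: not_less)
    then show ?thesis by eventually_elim (use \<open>q < q'\<close> in \<open>force intro: order_trans[of _ "ereal q'"]\<close>)
  qed
  have above: "AE x in M. g x < ereal q" if "C < ereal q" for q
  proof -
    have "prob {x\<in>space M. g x < ereal q} \<noteq> 0"
      using that SUP_upper[of q "{q. prob {x\<in>space M. g x < ereal q} = 0}" ereal]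
      by (auto simp: C_def)
    then show ?thesis using trivial[of q] by (subst (asm) prob_eq_1) auto
  qed
  have separated: "AE x in M. (ereal q < C \<longrightarrow> ereal q \<le> g x) \<and> (C < ereal q \<longrightarrow> g x < ereal q)" for q
  proof (cases "ereal q < C")
    case True
    show ?thesis using below[OF True] by eventually_elim (use True in auto)
  next
    case False
    then show ?thesis using above[of q] by (cases "C < ereal q") auto
  qed
  have "AE x in M. \<forall>r::rat. (ereal (of_rat r) < C \<longrightarrow> ereal (of_rat r) \<le> g x)
                          \<and> (C < ereal (of_rat r) \<longrightarrow> g x < ereal (of_rat r))"
    unfolding AE_all_countable using separated by blast
  then show "AE x in M. g x = C"
  proof eventually_elim
    case (elim x)
    show "g x = C"
    proof (rule antisym)
      show "g x \<le> C"
        using ereal_dense3[of C "g x"] elim by (metis less_asym not_le)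
      show "C \<le> g x"
        using ereal_dense3[of "g x" C] elim by (metis not_le)
    qed
  qed
qed

lemma (in prob_space) prob_tail_failures_tendsto_0:
  assumes [measurable]: "\<And>k. Measurable.pred M (P k)"
    and "AE z in M. eventually (\<lambda>k. P k z) sequentially"
  shows "(\<lambda>K. prob {z\<in>space M. \<exists>k\<ge>K. \<not> P k z}) \<longlonglongrightarrow> 0"
proof -
  define F where "F K = {z\<in>space M. \<exists>k\<ge>K. \<not> P k z}" for K
  have [measurable]: "F K \<in> sets M" for K unfolding F_def by measurable
  have "decseq F" unfolding decseq_def F_def by (auto intro: order_trans)
  moreover have "prob (\<Inter>K. F K) = 0"
    using assms(2) by (subst prob_eq_0) (auto simp: F_def eventually_sequentially elim!: eventually_mono)
  ultimately show ?thesis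
    using finite_Lim_measure_decseq[of F] by (auto simp: F_def[symmetric] image_subset_iff)
qed

definition eventually_doubling :: "real \<Rightarrow> (nat \<Rightarrow> real) \<Rightarrow> bool" where
  "eventually_doubling c s \<longleftrightarrow>
     (\<forall>\<^sub>F m in sequentially. 0 < s m \<and> s m \<le> s (Suc m) \<and> c * s m \<le> s (2 * m))"

lemma two_jumpy_imp_eventually_doubling:
  assumes "two_jumpy s"
  obtains c where "1 < c" "eventually_doubling c s"
proof -
  have pos: "\<forall>\<^sub>F m in sequentially. 0 < s m"
    using assms by (auto simp: two_jumpy_def scale_sequence_def eventually_sequentially)
  obtain c where c: "1 < ereal c" "ereal c < liminf (\<lambda>n. ereal (s (2 * n) / s n))"
    using assms ereal_dense2 unfolding two_jumpy_def by blast
  have "\<forall>\<^sub>F m in sequentially. c < s (2 * m) / s m"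
    using less_LiminfD[OF c(2)] by simp
  moreover have "\<forall>\<^sub>F m in sequentially. s m \<le> s (Suc m)"
    using assms unfolding two_jumpy_def by blast
  ultimately have "eventually_doubling c s"
    using pos unfolding eventually_doubling_def by eventually_elim (simp add: field_simps)
  with c(1) show thesis by (intro that) auto
qed

lemma doubling_scale_le:
  fixes s :: "nat \<Rightarrow> real"
  assumes doubling: "\<forall>m\<ge>m0. s m \<le> s (Suc m) \<and> c * s m \<le> s (2 * m)"
    and "m0 \<le> k" "2 * k \<le> n"
  shows "c * s k \<le> s n"
proof -
  have "c * s k \<le> s (2 * k)" using doubling \<open>m0 \<le> k\<close> by blast
  also have "\<dots> \<le> s n"
    by (rule lift_Suc_mono_le_ivl[where N="{m0..}"]) (use assms in auto)
  finally show ?thesis .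
qed

locale measure_preserving_map = prob_space N for N :: "'a measure" +
  fixes S :: "'a \<Rightarrow> 'a"
  assumes measurable_S [measurable]: "S \<in> N \<rightarrow>\<^sub>M N"
    and distr_S: "distr N N S = N"
begin

lemma measurable_funpow [measurable]: "S ^^ n \<in> N \<rightarrow>\<^sub>M N"
  by (rule measurable_compose_n) (rule measurable_S)

lemma distr_funpow: "distr N N (S ^^ n) = N"
proof (induction n)
  case (Suc n)
  have "distr N N (S ^^ Suc n) = distr N N (S ^^ n \<circ> S)"
    by (simp only: funpow_Suc_right)
  also have "\<dots> = distr (distr N N S) N (S ^^ n)"
    by (simp add: distr_distr)
  finally show ?case by (simp only: distr_S Suc)
qed (simp add: id_def)

lemma measure_funpow_vimage: "A \<in> sets N \<Longrightarrow> measure N ((S ^^ n) -` A \<inter> space N) = measure N A"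
  using measure_distr[OF measurable_funpow, of A n] distr_funpow by simp

lemma integrable_indicator_funpow:
  "A \<in> sets N \<Longrightarrow> integrable N (\<lambda>z. indicat_real A ((S ^^ n) z))"
  by (rule integrable_const_bound[where B=1]) auto

lemma integral_indicator_funpow:
  assumes [measurable]: "A \<in> sets N"
  shows "(\<integral>z. indicator A ((S ^^ n) z) \<partial>N) = measure N A"
proof -
  have "(\<integral>z. indicat_real A ((S ^^ n) z) \<partial>N) = (\<integral>z. indicator A z \<partial>distr N N (S ^^ n))"
    by (rule integral_distr[symmetric]) auto
  then show ?thesis using distr_funpow by simp
qed

lemma prob_maximal_upto_le:
  assumes [measurable]: "B \<in> sets N" and "0 < \<beta>"
  shows "prob {z\<in>space N. \<exists>n\<in>{1..K}. \<beta> * real n \<le> (\<Sum>t<n. indicator B ((S ^^ t) z))}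
           \<le> 2 / \<beta> * prob B"
    (is "prob ?E \<le> _")
proof (cases "K = 0")
  case False
  have [measurable]: "?E \<in> sets N" by measurable
  have pointwise: "\<beta> * (\<Sum>i<K. indicator ?E ((S ^^ i) z)) \<le> (\<Sum>t<K+K. indicator B ((S ^^ t) z))"
    if "z \<in> space N" for z
  proof -
    have "\<beta> * (\<Sum>i\<in>{0..<0+K}. of_bool ((S ^^ i) z \<in> ?E)) \<le> (\<Sum>t\<in>{0..<0+K+K}. indicator B ((S ^^ t) z))"
    proof (rule sum_of_bool_le_sum_windows)
      fix i assume "(S ^^ i) z \<in> ?E"
      then obtain n where "n \<in> {1..K}" "\<beta> * real n \<le> (\<Sum>t<n. indicator B ((S ^^ (t + i)) z))"
        by (auto simp: funpow_add)
      moreover have "(\<Sum>t<n. indicator B ((S ^^ (t + i)) z)) = (\<Sum>t\<in>{i..<i+n}. indicat_real B ((S ^^ t) z))"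
        by (induction n) (auto simp: add.commute)
      ultimately show "\<exists>n\<in>{1..K}. \<beta> * real n \<le> (\<Sum>t\<in>{i..<i+n}. indicator B ((S ^^ t) z))"
        by auto
    qed (use \<open>0 < \<beta>\<close> in auto)
    then show ?thesis by (simp add: indicator_def atLeast0LessThan)
  qed
  have "\<beta> * (real K * measure N ?E) = (\<integral>z. \<beta> * (\<Sum>i<K. indicator ?E ((S ^^ i) z)) \<partial>N)"
    by (simp add: integral_sum integrable_indicator_funpow integral_indicator_funpow)
  also have "\<dots> \<le> (\<integral>z. (\<Sum>t<K+K. indicator B ((S ^^ t) z)) \<partial>N)"
    by (intro integral_mono_AE AE_I2 pointwise) (auto intro!: integrable_sum integrable_indicator_funpow)
  also have "\<dots> = real K * (2 * measure N B)"
    by (simp add: integral_sum integrable_indicator_funpow integral_indicator_funpow)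
  finally show ?thesis
    using False \<open>0 < \<beta>\<close> by (simp add: field_simps)
qed (use \<open>0 < \<beta>\<close> in simp)

lemma prob_maximal_le:
  assumes [measurable]: "B \<in> sets N" and "0 < \<beta>"
  shows "prob {z\<in>space N. \<exists>n\<ge>1. \<beta> * real n \<le> (\<Sum>t<n. indicator B ((S ^^ t) z))} \<le> 2 / \<beta> * prob B"
proof -
  define E where "E K = {z\<in>space N. \<exists>n\<in>{1..K}. \<beta> * real n \<le> (\<Sum>t<n. indicator B ((S ^^ t) z))}" for K
  have [measurable]: "E K \<in> sets N" for K unfolding E_def by measurable
  have "incseq E" unfolding incseq_def E_def by force
  then have "(\<lambda>K. prob (E K)) \<longlonglongrightarrow> prob (\<Union>K. E K)"
    by (intro finite_Lim_measure_incseq) auto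
  then have "prob (\<Union>K. E K) \<le> 2 / \<beta> * prob B"
    by (rule LIMSEQ_le_const2) (use prob_maximal_upto_le[OF assms] in \<open>auto simp: E_def\<close>)
  moreover have "(\<Union>K. E K) = {z\<in>space N. \<exists>n\<ge>1. \<beta> * real n \<le> (\<Sum>t<n. indicator B ((S ^^ t) z))}"
    unfolding E_def by force
  ultimately show ?thesis by simp
qed

lemma frequent_visits_if_doubling:
  fixes D :: "'a \<Rightarrow> real" and s :: "nat \<Rightarrow> real"
  assumes D_nonneg: "\<And>z. 0 \<le> D z"
    and doubling: "\<forall>m\<ge>m0. s m \<le> s (Suc m) \<and> c * s m \<le> s (2 * m)" and "0 < c" and "m0 \<le> K"
    and B: "\<And>w k. w \<in> space N \<Longrightarrow> K \<le> k \<Longrightarrow> s k * D ((S ^^ k) w) < a \<Longrightarrow> w \<in> B"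
    and "z \<in> space N" and n: "4 * K \<le> n" "s n * D ((S ^^ n) z) < c * a"
  shows "real (n + 1) \<le> 5 * (\<Sum>t<n + 1. indicator B ((S ^^ t) z))"
proof -
  define h where "h = n - n div 2"
  have visit: "(S ^^ j) z \<in> B" if "h \<le> j" "j + K \<le> n" for j
  proof -
    define k where "k = n - j"
    have "n = k + j" using that by (simp add: k_def)
    then have k: "K \<le> k" "2 * k \<le> n" "(S ^^ k) ((S ^^ j) z) = (S ^^ n) z"
      using that by (auto simp: h_def funpow_add)
    have "c * s k \<le> s n"
      using doubling \<open>m0 \<le> K\<close> k by (intro doubling_scale_le) auto
    then have "c * (s k * D ((S ^^ n) z)) \<le> s n * D ((S ^^ n) z)"
      using D_nonneg by (simp add: mult.assoc[symmetric] mult_right_mono)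
    also have "\<dots> < c * a" by (rule n(2))
    finally have "s k * D ((S ^^ k) ((S ^^ j) z)) < a" using \<open>0 < c\<close> k(3) by simp
    moreover have "(S ^^ j) z \<in> space N" using measurable_space[OF measurable_funpow] \<open>z \<in> space N\<close> by blast
    ultimately show ?thesis using k(1) B by blast
  qed
  have "real (n + 1) \<le> 5 * real (card {h..<n + 1 - K})"
    using n(1) by (simp add: h_def)
  also have "real (card {h..<n + 1 - K}) = (\<Sum>t\<in>{h..<n + 1 - K}. indicator B ((S ^^ t) z))"
    using n(1) by (subst sum.cong[OF refl, of _ _ "\<lambda>_. 1"]) (auto intro!: indicator_simps(1) visit)
  also have "\<dots> \<le> (\<Sum>t<n + 1. indicator B ((S ^^ t) z))"
    by (rule sum_mono2) auto
  finally show ?thesis by simp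
qed

lemma gauge_window_impossible:
  fixes D :: "'a \<Rightarrow> real" and s :: "nat \<Rightarrow> real"
  assumes [measurable]: "D \<in> borel_measurable N" and D_nonneg: "\<And>z. 0 \<le> D z"
    and doubling: "\<forall>m\<ge>m0. s m \<le> s (Suc m) \<and> c * s m \<le> s (2 * m)" and "0 < c"
    and lower: "AE z in N. ereal a < liminf (\<lambda>n. ereal (s n * D ((S ^^ n) z)))"
    and upper: "AE z in N. liminf (\<lambda>n. ereal (s n * D ((S ^^ n) z))) < ereal (c * a)"
  shows False
proof -
  define Bad where "Bad K = {w\<in>space N. \<exists>k\<ge>K. \<not> a < s k * D ((S ^^ k) w)}" for K
  have [measurable]: "Bad K \<in> sets N" for K unfolding Bad_def by measurable
  have "(\<lambda>K. prob (Bad K)) \<longlonglongrightarrow> 0"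
    unfolding Bad_def
  proof (rule prob_tail_failures_tendsto_0)
    show "AE w in N. \<forall>\<^sub>F k in sequentially. a < s k * D ((S ^^ k) w)"
      using lower by eventually_elim (use less_LiminfD in force)
  qed measurable
  then have "\<forall>\<^sub>F K in sequentially. prob (Bad K) < 1 / 20"
    by (rule order_tendstoD) simp
  then obtain K where "m0 \<le> K" "prob (Bad K) < 1 / 20"
    using eventually_ge_at_top[of m0] by (metis (lifting) eventually_sequentially eventually_conj_iff order_refl)
  define E where "E = {z\<in>space N. \<exists>n\<ge>1. 1 / 5 * real n \<le> (\<Sum>t<n. indicator (Bad K) ((S ^^ t) z))}"
  have [measurable]: "E \<in> sets N" unfolding E_def by measurable
  have "prob E \<le> 2 / (1 / 5) * prob (Bad K)"
    unfolding E_def by (rule prob_maximal_le) auto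
  with \<open>prob (Bad K) < 1 / 20\<close> have "prob E < 1" by simp
  moreover have "AE z in N. z \<in> E"
    using upper AE_space
  proof eventually_elim
    case (elim z)
    have "\<exists>n\<ge>4 * K. s n * D ((S ^^ n) z) < c * a"
    proof (rule ccontr)
      assume "\<not> ?thesis"
      then have "\<forall>\<^sub>F n in sequentially. ereal (c * a) \<le> ereal (s n * D ((S ^^ n) z))"
        by (auto simp: eventually_sequentially not_less)
      then have "ereal (c * a) \<le> liminf (\<lambda>n. ereal (s n * D ((S ^^ n) z)))" by (rule Liminf_bounded)
      with elim(1) show False by simp
    qed
    then obtain n where "4 * K \<le> n" "s n * D ((S ^^ n) z) < c * a" by blast
    then have "real (n + 1) \<le> 5 * (\<Sum>t<n + 1. indicator (Bad K) ((S ^^ t) z))"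
      using D_nonneg doubling \<open>0 < c\<close> \<open>m0 \<le> K\<close> elim(2)
      by (intro frequent_visits_if_doubling[where a=a]) (auto simp: Bad_def)
    then show "z \<in> E" unfolding E_def using elim(2) by (intro CollectI conjI exI[of _ "n + 1"]) auto
  qed
  then have "prob E = 1" by (subst prob_eq_1) auto
  ultimately show False by simp
qed

lemma subinvariant_funpow_le:
  fixes g :: "'a \<Rightarrow> 'b::preorder"
  assumes sub: "\<And>z. z \<in> space N \<Longrightarrow> g (S z) \<le> g z" and "z \<in> space N"
  shows "g ((S ^^ n) z) \<le> g z"
proof (induction n)
  case (Suc n)
  have "(S ^^ n) z \<in> space N" using measurable_space[OF measurable_funpow] \<open>z \<in> space N\<close> by blast
  then show ?case using Suc sub by (metis funpow.simps(2) comp_apply order_trans)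
qed simp

lemma AE_funpow_mem_imp_mem:
  assumes [measurable]: "A \<in> sets N" and "A \<subseteq> (S ^^ n) -` A \<inter> space N"
  shows "AE z in N. (S ^^ n) z \<in> A \<longrightarrow> z \<in> A"
proof -
  have "prob ((S ^^ n) -` A \<inter> space N - A) = 0"
    using assms(2) by (simp add: finite_measure_Diff measure_funpow_vimage)
  then have "AE z in N. z \<notin> (S ^^ n) -` A \<inter> space N - A"
    by (subst (asm) prob_eq_0) auto
  then show ?thesis using AE_space by eventually_elim auto
qed

lemma sublevel_trivial_if_subinvariant:
  fixes g :: "'a \<Rightarrow> ereal"
  assumes "ergodic N S" and [measurable]: "g \<in> borel_measurable N"
    and sub: "\<And>z. z \<in> space N \<Longrightarrow> g (S z) \<le> g z"
  shows "prob {z\<in>space N. g z < q} = 0 \<or> prob {z\<in>space N. g z < q} = 1"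
proof -
  define Q where "Q = {z\<in>space N. g z < q}"
  define I where "I = {z\<in>space N. \<exists>n. g ((S ^^ n) z) < q}"
  have [measurable]: "Q \<in> sets N" "I \<in> sets N" unfolding Q_def I_def by measurable
  have orbit_space: "(S ^^ n) z \<in> space N" if "z \<in> space N" for n z
    using measurable_space[OF measurable_funpow] that by blast
  have "S -` I \<inter> space N = I"
  proof (intro set_eqI iffI)
    fix z assume "z \<in> S -` I \<inter> space N"
    then obtain n where "z \<in> space N" "g ((S ^^ n) (S z)) < q"
      by (auto simp: I_def)
    then have "z \<in> space N" "g ((S ^^ Suc n) z) < q"
      by (simp_all only: funpow_Suc_right comp_apply)
    then show "z \<in> I" unfolding I_def by blast
  next
    fix z assume "z \<in> I"
    then obtain n where z: "z \<in> space N" "g ((S ^^ n) z) < q" unfolding I_def by blast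
    have "g ((S ^^ n) (S z)) = g (S ((S ^^ n) z))" by (simp only: funpow_swap1)
    also have "\<dots> \<le> g ((S ^^ n) z)" using sub orbit_space z(1) by blast
    also have "\<dots> < q" by (rule z(2))
    finally have "g ((S ^^ n) (S z)) < q" .
    with z show "z \<in> S -` I \<inter> space N" using measurable_space[OF measurable_S] unfolding I_def by blast
  qed
  then have "prob I = 0 \<or> prob I = 1"
    using \<open>ergodic N S\<close> unfolding ergodic_def by simp
  have "Q \<subseteq> (S ^^ n) -` Q \<inter> space N" for n
    using subinvariant_funpow_le[of g, OF sub] orbit_space unfolding Q_def by (auto intro: le_less_trans)
  then have "AE z in N. (S ^^ n) z \<in> Q \<longrightarrow> z \<in> Q" for n
    by (rule AE_funpow_mem_imp_mem[rotated]) simp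
  then have "AE z in N. \<forall>n. (S ^^ n) z \<in> Q \<longrightarrow> z \<in> Q"
    by (subst AE_all_countable) simp
  then have "AE z in N. z \<in> I \<longleftrightarrow> z \<in> Q"
    using AE_space by eventually_elim (auto simp: I_def Q_def orbit_space intro: exI[of _ 0])
  then have "prob I = prob Q" by (rule measure_eq_AE) auto
  with \<open>prob I = 0 \<or> prob I = 1\<close> show ?thesis unfolding Q_def by simp
qed

lemma AE_eq_const_if_subinvariant:
  fixes g :: "'a \<Rightarrow> ereal"
  assumes "ergodic N S" and "g \<in> borel_measurable N"
    and "\<And>z. z \<in> space N \<Longrightarrow> g (S z) \<le> g z"
  shows "\<exists>C. AE z in N. g z = C"
  using assms by (intro AE_eq_const_if_sublevels_trivial sublevel_trivial_if_subinvariant) auto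

lemma gauge_zero_or_infinity:
  fixes D :: "'a \<Rightarrow> real" and s :: "nat \<Rightarrow> real"
  assumes "ergodic N S" and [measurable]: "D \<in> borel_measurable N" and D_nonneg: "\<And>z. 0 \<le> D z"
    and "eventually_doubling c s" and "1 < c"
  shows "(AE z in N. liminf (\<lambda>n. ereal (s n * D ((S ^^ n) z))) = 0) \<or>
         (AE z in N. liminf (\<lambda>n. ereal (s n * D ((S ^^ n) z))) = \<infinity>)"
proof -
  define L where "L z = liminf (\<lambda>n. ereal (s n * D ((S ^^ n) z)))" for z
  have L_measurable [measurable]: "L \<in> borel_measurable N" unfolding L_def by measurable
  obtain m0 where doubling: "\<forall>m\<ge>m0. 0 < s m \<and> s m \<le> s (Suc m) \<and> c * s m \<le> s (2 * m)"
    using \<open>eventually_doubling c s\<close> unfolding eventually_doubling_def eventually_sequentially by blast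
  have L_nonneg: "0 \<le> L z" for z
    unfolding L_def using doubling D_nonneg
    by (intro Liminf_bounded) (auto simp: eventually_sequentially intro!: exI[of _ m0])
  have L_subinvariant: "L (S z) \<le> L z" for z
  proof -
    have "L (S z) = liminf (\<lambda>n. ereal (s n * D ((S ^^ Suc n) z)))"
      by (simp add: L_def funpow_swap1)
    also have "\<dots> \<le> liminf (\<lambda>n. ereal (s (Suc n) * D ((S ^^ Suc n) z)))"
      using doubling D_nonneg
      by (intro Liminf_mono) (auto simp: eventually_sequentially intro!: exI[of _ m0] mult_right_mono)
    also have "\<dots> = L z"
      unfolding L_def using liminf_shift[of "\<lambda>n. ereal (s n * D ((S ^^ n) z))"] by simp
    finally show ?thesis .
  qed
  obtain C where C: "AE z in N. L z = C"
    using AE_eq_const_if_subinvariant[OF \<open>ergodic N S\<close> L_measurable] L_subinvariant by blast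
  have "0 \<le> C" using C L_nonneg by (metis (mono_tags) AE_const eventually_mono)
  consider "C = 0" | "C = \<infinity>" | r where "C = ereal r" "0 < r"
    using \<open>0 \<le> C\<close> by (cases C) force+
  then show ?thesis
  proof cases
    case 3
    define a where "a = 2 / (1 + c) * r"
    have "\<forall>m\<ge>m0. s m \<le> s (Suc m) \<and> c * s m \<le> s (2 * m)" using doubling by blast
    moreover have "AE z in N. ereal a < L z" "AE z in N. L z < ereal (c * a)"
      using C 3 \<open>1 < c\<close> by (auto simp: a_def field_simps elim!: eventually_mono)
    ultimately show ?thesis
      using gauge_window_impossible[of D m0 s c a] \<open>1 < c\<close> D_nonneg unfolding L_def by auto
  qed (use C in \<open>auto simp: L_def elim!: eventually_mono\<close>)
qed

end

lemma funpow_pair_map: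
  fixes f :: "'a \<Rightarrow> 'a" and g :: "'b \<Rightarrow> 'b"
  shows "((\<lambda>(x, y). (f x, g y)) ^^ n) z = ((f ^^ n) (fst z), (g ^^ n) (snd z))"
  by (induction n) (simp_all add: case_prod_beta)

lemma measure_preserving_map_pair:
  assumes "prob_space M" and [measurable]: "T \<in> M \<rightarrow>\<^sub>M M" and "distr M M T = M"
  shows "measure_preserving_map (M \<Otimes>\<^sub>M M) (\<lambda>(x, y). (T x, T y))"
proof (intro measure_preserving_map.intro measure_preserving_map_axioms.intro)
  show "prob_space (M \<Otimes>\<^sub>M M)" by (intro prob_space_pair assms(1))
  show "(\<lambda>(x, y). (T x, T y)) \<in> M \<Otimes>\<^sub>M M \<rightarrow>\<^sub>M M \<Otimes>\<^sub>M M" by measurable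
  have "sigma_finite_measure M" using assms(1) by (simp add: prob_space_imp_sigma_finite)
  then show "distr (M \<Otimes>\<^sub>M M) (M \<Otimes>\<^sub>M M) (\<lambda>(x, y). (T x, T y)) = M \<Otimes>\<^sub>M M"
    using pair_measure_distr[of T M M T M M] assms(3) by simp
qed

lemma borel_measurable_dist_pair:
  fixes M :: "'a::metric_space measure"
  assumes "separable_space (euclidean :: 'a topology)" and "sets M = sets borel"
  shows "(\<lambda>z. dist (fst z) (snd z)) \<in> borel_measurable (M \<Otimes>\<^sub>M M)"
proof (rule borel_measurableI_less)
  fix y
  obtain C where "countable C" and dense: "closure C = (UNIV :: 'a set)"
    using assms(1) unfolding separable_space_def by auto
  have [measurable]: "(\<lambda>x. dist x c) \<in> borel_measurable M" "(\<lambda>x. dist c x) \<in> borel_measurable M" for c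
    unfolding measurable_cong_sets[OF assms(2) refl]
    by (auto intro!: borel_measurable_continuous_onI continuous_intros)
  have "{z\<in>space (M \<Otimes>\<^sub>M M). dist (fst z) (snd z) < y} =
        (\<Union>c\<in>C. {z\<in>space (M \<Otimes>\<^sub>M M). dist (fst z) c + dist c (snd z) < y})"
  proof (intro set_eqI iffI)
    fix z assume z: "z \<in> {z\<in>space (M \<Otimes>\<^sub>M M). dist (fst z) (snd z) < y}"
    then obtain c where c: "c \<in> C" "dist c (fst z) < (y - dist (fst z) (snd z)) / 2"
      using closure_approachable[of "fst z" C] dense by (metis UNIV_I half_gt_zero diff_gt_0_iff_gt mem_Collect_eq)
    have "dist (fst z) c + dist c (snd z) < y"
      using c(2) dist_triangle[of c "snd z" "fst z"] by (simp add: dist_commute)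
    with z c(1) show "z \<in> (\<Union>c\<in>C. {z\<in>space (M \<Otimes>\<^sub>M M). dist (fst z) c + dist c (snd z) < y})"
      by blast
  qed (use dist_triangle le_less_trans in blast)
  also have "\<dots> \<in> sets (M \<Otimes>\<^sub>M M)"
    using \<open>countable C\<close> by (intro sets.countable_UN'') measurable
  finally show "{z\<in>space (M \<Otimes>\<^sub>M M). dist (fst z) (snd z) < y} \<in> sets (M \<Otimes>\<^sub>M M)" .
qed

theorem corollary3p10:
  fixes M :: "'a::metric_space measure" and T :: "'a \<Rightarrow> 'a" and s :: "nat \<Rightarrow> real"
  assumes "separable_space (euclidean :: 'a topology)"
    and "sets M = sets borel"
    and "prob_space M"
    and "T \<in> borel_measurable borel"
    and "distr M M T = M"
    and "weakly_mixing M T"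
    and "two_jumpy s"
  shows "(AE z in M \<Otimes>\<^sub>M M. prox_gauge s T (fst z) (snd z) = 0) \<or>
         (AE z in M \<Otimes>\<^sub>M M. prox_gauge s T (fst z) (snd z) = \<infinity>)"
proof -
  have "T \<in> M \<rightarrow>\<^sub>M M" using assms(4) measurable_cong_sets[OF assms(2) assms(2)] by simp
  then interpret measure_preserving_map "M \<Otimes>\<^sub>M M" "\<lambda>(x, y). (T x, T y)"
    using assms(3,5) by (intro measure_preserving_map_pair)
  obtain c where "1 < c" "eventually_doubling c s"
    using assms(7) by (rule two_jumpy_imp_eventually_doubling)
  have "prox_gauge s T (fst z) (snd z) =
        liminf (\<lambda>n. ereal (s n * dist (fst (((\<lambda>(x, y). (T x, T y)) ^^ n) z)) (snd (((\<lambda>(x, y). (T x, T y)) ^^ n) z))))" for z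
    by (simp add: prox_gauge_def funpow_pair_map)
  then show ?thesis
    using gauge_zero_or_infinity[OF _ borel_measurable_dist_pair[OF assms(1,2)] zero_le_dist \<open>eventually_doubling c s\<close> \<open>1 < c\<close>]
      assms(6) unfolding weakly_mixing_def by simp
qed

end
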